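(* For every integer $k \geq 2$ there exists a set $T \subset \mathbb{R}^2$ such that: (1) for any $2k+3$ points of $T$ there is a point $x \in T$ that sees each of them through $T$; and (2) there exist $2k+4$ points of $T$ that are not all seen through $T$ from any single point of $T$.
   Context: For a set $S \subset \mathbb{R}^2$ and points $x,y \in S$, "$x$ sees $y$ through $S$" means that the closed segment $[x,y]$ is contained in $S$. *)

theory Defs
  imports "HOL-Analysis.Analysis"
begin

definition sees_through :: "(real^2) set \<Rightarrow> real^2 \<Rightarrow> real^2 \<Rightarrow> bool" where
  "sees_through S x y \<longleftrightarrow> x \<in> S \<and> y \<in> S \<and> closed_segment x y \<subseteq> S"

end

theory Submission
  imports Defs
begin

(*
  Let T be the plane with the points (s, 0), s \<notin> S, removed. A segment crossing the axis
  lies in T iff the abscissa of its crossing point lies in S. So T has both properties once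
  (a) for any k points below the axis there is a point above whose segments to them cross the
      axis in S, i.e. which sees them (by reflection, also with above and below exchanged),
  (b) S contains no arithmetic progression of k + 1 terms with difference in (0, 1), and
  (c) 0, 2 \<in> S and 1 \<notin> S.
  Indeed, of 2k + 3 points either at most one lies on the axis and an axis point sees all of
  them, or at most k lie strictly on one side and a point on the other side sees all of them.
  The 2k + 4 points (0, 0), (2, 0), (i, \<plusminus>1) with i \<le> k are not seen from one point: from
  above, the crossings towards the (i, -1) form a progression forbidden by (b), symmetrically
  from below, and from the axis (1, 0) blocks (0, 0) or (2, 0).
  S is built greedily along a well-order of the k-point configurations of length the
  continuum: each stage has used fewer than continuum many reals, and all but fewer than
  continuum many viewpoints keep (b) and (c).
*)

unbundle cardinal_syntax

section \<open>Sets of size less than the continuum\<close>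

definition small :: "'a set \<Rightarrow> bool" where
  "small A \<longleftrightarrow> |A| <o |UNIV :: real set|"

lemma small_finite: "finite A \<Longrightarrow> small A"
  unfolding small_def
  by (rule finite_ordLess_infinite)
    (auto simp: card_of_Well_order card_of_well_order_on Field_card_of infinite_UNIV_char_0)

lemma small_subset: "small B \<Longrightarrow> A \<subseteq> B \<Longrightarrow> small A"
  unfolding small_def using card_of_mono1 ordLeq_ordLess_trans by blast

lemma small_image: "small A \<Longrightarrow> small (f ` A)"
  unfolding small_def using card_of_image ordLeq_ordLess_trans by blast

lemma small_Un: "small A \<Longrightarrow> small B \<Longrightarrow> small (A \<union> B)"
  unfolding small_def using card_of_Un_ordLess_infinite infinite_UNIV_char_0 by blast

lemma not_small_UNIV: "\<not> small (UNIV :: real set)"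
  unfolding small_def using ordLess_irreflexive by blast

lemma small_Times_le:
  assumes "small B" "|A| \<le>o |B|"
  shows "small (A \<times> B)"
proof (cases "finite B")
  case True
  then have "finite A" using assms(2) card_of_ordLeq_finite by blast
  with True show ?thesis by (intro small_finite) simp
next
  case False
  have "|A \<times> B| \<le>o |B \<times> B|" using assms(2) card_of_Times_mono1 by blast
  moreover have "|B \<times> B| =o |B|" using False card_of_Times_same_infinite by blast
  ultimately have "|A \<times> B| \<le>o |B|" using ordLeq_ordIso_trans by blast
  then show ?thesis using assms(1) unfolding small_def using ordLeq_ordLess_trans by blast
qed

lemma small_Times:
  assumes "small A" "small B"
  shows "small (A \<times> B)"
proof (cases "|A| \<le>o |B|")
  case True
  then show ?thesis using assms(2) by (rule small_Times_le[rotated])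
next
  case False
  then have "|B| \<le>o |A|" using ordLeq_total[OF card_of_Well_order card_of_Well_order] by blast
  then have "small (B \<times> A)" using assms(1) by (rule small_Times_le[rotated])
  then have "small (prod.swap ` (B \<times> A))" by (rule small_image)
  then show ?thesis by (simp add: product_swap)
qed

lemma small_UNION_finite:
  assumes I: "small I" and F: "\<And>i. i \<in> I \<Longrightarrow> finite (F i)"
  shows "small (\<Union>i\<in>I. F i)"
proof (cases "finite I")
  case True
  then show ?thesis using F by (intro small_finite) auto
next
  case False
  have "|F i| \<le>o |I|" if "i \<in> I" for i
    using F[OF that] False
    by (intro ordLess_imp_ordLeq finite_ordLess_infinite)
      (auto simp: card_of_Well_order card_of_well_order_on Field_card_of)
  then have "|\<Union>i\<in>I. F i| \<le>o |I|"
    using card_of_UNION_ordLeq_infinite[OF False] ordLeq_refl[OF card_of_Card_order] by blast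
  then show ?thesis using I unfolding small_def using ordLeq_ordLess_trans by blast
qed

lemma small_underS_card_of:
  assumes "|UNIV :: 'a set| \<le>o |UNIV :: real set|"
  shows "small (underS |UNIV :: 'a set| a)"
proof -
  have "|underS |UNIV :: 'a set| a| <o |UNIV :: 'a set|"
    by (rule card_of_underS) (simp_all add: card_of_Card_order card_of_card_order_on Field_card_of)
  then show ?thesis using assms ordLess_ordLeq_trans unfolding small_def by blast
qed

lemma card_of_lists_length_le:
  assumes "infinite (UNIV :: 'a set)"
  shows "|{xs :: 'a list. length xs = n}| \<le>o |UNIV :: 'a set|"
proof (induction n)
  case 0
  have "|{xs :: 'a list. length xs = 0}| <o |UNIV :: 'a set|" using assms
    by (intro finite_ordLess_infinite) (auto simp: card_of_Well_order card_of_well_order_on Field_card_of)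
  then show ?case by (rule ordLess_imp_ordLeq)
next
  case (Suc n)
  have "inj_on (\<lambda>xs. (hd xs, tl xs)) {xs :: 'a list. length xs = Suc n}"
    by (auto simp: inj_on_def intro: list.expand)
  moreover have "(\<lambda>xs. (hd xs, tl xs)) ` {xs :: 'a list. length xs = Suc n} \<subseteq> UNIV \<times> {xs. length xs = n}"
    by auto
  ultimately have "|{xs :: 'a list. length xs = Suc n}| \<le>o |(UNIV :: 'a set) \<times> {xs :: 'a list. length xs = n}|"
    using card_of_ordLeq by blast
  also have "|(UNIV :: 'a set) \<times> {xs :: 'a list. length xs = n}| \<le>o |(UNIV :: 'a set) \<times> (UNIV :: 'a set)|"
    using Suc.IH card_of_Times_mono2 by blast
  also have "|(UNIV :: 'a set) \<times> (UNIV :: 'a set)| =o |UNIV :: 'a set|"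
    using assms card_of_Times_same_infinite by blast
  finally show ?case .
qed

lemma card_of_lists_le:
  assumes "infinite (UNIV :: 'a set)"
  shows "|UNIV :: 'a list set| \<le>o |UNIV :: 'a set|"
proof -
  have "|\<Union>n. {xs :: 'a list. length xs = n}| \<le>o |UNIV :: 'a set|"
    using assms card_of_lists_length_le[OF assms] infinite_iff_card_of_nat
    by (intro card_of_UNION_ordLeq_infinite) auto
  moreover have "(\<Union>n. {xs :: 'a list. length xs = n}) = UNIV" by auto
  ultimately show ?thesis by simp
qed

lemma card_of_plane_lists_le: "|UNIV :: (real^2) list set| \<le>o |UNIV :: real set|"
proof -
  have "inj (\<lambda>x::real^2. (x$1, x$2))"
    by (auto simp: inj_def vec_eq_iff forall_2)
  then have "|UNIV :: (real^2) set| \<le>o |(UNIV :: real set) \<times> (UNIV :: real set)|"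
    using card_of_ordLeq[of "UNIV :: (real^2) set"] by blast
  also have "|(UNIV :: real set) \<times> (UNIV :: real set)| =o |UNIV :: real set|"
    using infinite_UNIV_char_0 card_of_Times_same_infinite by blast
  finally have "|UNIV :: (real^2) set| \<le>o |UNIV :: real set|" .
  with card_of_lists_le[OF infinite_UNIV_vec[OF infinite_UNIV_char_0]]
  show ?thesis by (rule ordLeq_transitive)
qed

section \<open>Greedy transfinite constructions\<close>

definition finite_character :: "('a set \<Rightarrow> bool) \<Rightarrow> bool" where
  "finite_character P \<longleftrightarrow> (\<forall>S. P S \<longleftrightarrow> (\<forall>F\<subseteq>S. finite F \<longrightarrow> P F))"

lemma finite_characterD: "finite_character P \<Longrightarrow> P S \<longleftrightarrow> (\<forall>F\<subseteq>S. finite F \<longrightarrow> P F)"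
  unfolding finite_character_def by (rule spec)

lemma finite_character_from_finite_subsets:
  "finite_character P \<Longrightarrow> (\<And>F. F \<subseteq> S \<Longrightarrow> finite F \<Longrightarrow> P F) \<Longrightarrow> P S"
  using finite_characterD by auto

lemma finite_character_subset: "finite_character P \<Longrightarrow> P S \<Longrightarrow> T \<subseteq> S \<Longrightarrow> P T"
  using finite_characterD[of P S] finite_characterD[of P T] by auto

lemma finite_character_conj:
  assumes "finite_character P" "finite_character Q"
  shows "finite_character (\<lambda>S. P S \<and> Q S)"
  unfolding finite_character_def
proof
  fix S
  show "(P S \<and> Q S) \<longleftrightarrow> (\<forall>F\<subseteq>S. finite F \<longrightarrow> P F \<and> Q F)"
    using finite_characterD[OF assms(1), of S] finite_characterD[OF assms(2), of S] by auto
qed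

lemma finite_character_Union_chain:
  assumes P: "finite_character P" and chain: "chain\<^sub>\<subseteq> \<C>" and "\<C> \<noteq> {}"
    and members: "\<And>C. C \<in> \<C> \<Longrightarrow> P C"
  shows "P (\<Union>\<C>)"
proof (rule finite_character_from_finite_subsets[OF P])
  fix F assume "F \<subseteq> \<Union>\<C>" "finite F"
  have "subset.chain UNIV \<C>" using chain by (simp add: chain_subset_alt_def)
  then obtain C where "C \<in> \<C>" "F \<subseteq> C"
    by (rule finite_subset_Union_chain[OF \<open>finite F\<close> \<open>F \<subseteq> \<Union>\<C>\<close> \<open>\<C> \<noteq> {}\<close>])
  then show "P F" using finite_character_subset[OF P members] by simp
qed

lemma finite_character_Union_stages:
  assumes P: "finite_character P" "P S0" and r: "well_order r"
    and stages: "\<And>b. b \<in> I \<Longrightarrow> P (S0 \<union> \<Union>(f ` underS r b) \<union> f b)"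
  shows "P (S0 \<union> \<Union>(f ` I))"
proof -
  have tr: "trans r" and an: "antisym r" and tot: "total_on UNIV r"
    using r by (auto simp: well_order_on_def linear_order_on_def partial_order_on_def preorder_on_def)
  define stage where "stage b = S0 \<union> \<Union>(f ` underS r b) \<union> f b" for b
  have mono: "stage b \<subseteq> stage b'" if "(b, b') \<in> r" for b b'
  proof (cases "b = b'")
    case False
    then have "b \<in> underS r b'" using that by (simp add: underS_def)
    with underS_incr[OF tr an that] show ?thesis unfolding stage_def by blast
  qed simp
  have "stage b \<subseteq> stage b' \<or> stage b' \<subseteq> stage b" for b b'
  proof (cases "b = b'")
    case False
    then have "(b, b') \<in> r \<or> (b', b) \<in> r" using tot by (simp add: total_on_def)
    then show ?thesis using mono by blast
  qed simp
  moreover have "S0 \<subseteq> stage b" for b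
    unfolding stage_def by blast
  ultimately have chain: "chain\<^sub>\<subseteq> (insert S0 (stage ` I))"
    unfolding chain_subset_def by blast
  have "P (\<Union>(insert S0 (stage ` I)))"
    by (rule finite_character_Union_chain[OF P(1) chain]) (use P(2) stages stage_def in auto)
  moreover have "S0 \<union> \<Union>(f ` I) \<subseteq> \<Union>(insert S0 (stage ` I))"
    unfolding stage_def by blast
  ultimately show ?thesis by (rule finite_character_subset[OF P(1)])
qed

lemma transfinite_greedy_construction:
  fixes P :: "'b set \<Rightarrow> bool" and Q :: "'a \<Rightarrow> 'b set \<Rightarrow> bool"
  assumes tasks: "|UNIV :: 'a set| \<le>o |UNIV :: real set|"
    and P: "finite_character P" "P S0" "small S0"
    and step: "\<And>S a. small S \<Longrightarrow> P S \<Longrightarrow> \<exists>X. finite X \<and> Q a X \<and> P (S \<union> X)"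
  shows "\<exists>S. S0 \<subseteq> S \<and> P S \<and> (\<forall>a. \<exists>X\<subseteq>S. Q a X)"
proof -
  define r where "r = |UNIV :: 'a set|"
  have r: "well_order r" unfolding r_def by (rule card_of_well_order_on)
  then have wf: "wf (r - Id)" by (simp add: well_order_on_def)
  have small_underS: "small (underS r a)" for a
    unfolding r_def using tasks by (rule small_underS_card_of)
  define before where "before F a = S0 \<union> \<Union>(F ` underS r a)" for F :: "'a \<Rightarrow> 'b set" and a
  define pick where "pick F a = (SOME X. finite X \<and> Q a X \<and> P (before F a \<union> X))" for F a
  define F where "F = wfrec (r - Id) pick"
  have "adm_wf (r - Id) pick"
  proof (unfold adm_wf_def, intro allI impI)
    fix f g :: "'a \<Rightarrow> 'b set" and a
    assume "\<forall>b. (b, a) \<in> r - Id \<longrightarrow> f b = g b"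
    then have "before f a = before g a" unfolding before_def underS_def by auto
    then show "pick f a = pick g a" unfolding pick_def by simp
  qed
  then have "F = pick F" unfolding F_def by (rule wfrec_fixpoint[OF wf])
  then have F_eq: "F a = (SOME X. finite X \<and> Q a X \<and> P (before F a \<union> X))" for a
    unfolding pick_def by (rule fun_cong)
  have stage: "finite (F a) \<and> Q a (F a) \<and> P (before F a \<union> F a)" for a
    using wf
  proof (induction a rule: wf_induct_rule)
    case (less a)
    then have IH: "finite (F b) \<and> P (before F b \<union> F b)" if "b \<in> underS r a" for b
      using that by (auto simp: underS_def)
    have "small (before F a)"
      unfolding before_def using P(3) small_underS IH by (intro small_Un small_UNION_finite) auto
    moreover have "P (before F a)"
      unfolding before_def by (rule finite_character_Union_stages[OF P(1,2) r]) (use IH before_def in auto)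
    ultimately have "\<exists>X. finite X \<and> Q a X \<and> P (before F a \<union> X)" by (rule step)
    from someI_ex[OF this] show ?case unfolding F_eq[of a] .
  qed
  show ?thesis
  proof (rule exI, intro conjI allI)
    show "S0 \<subseteq> S0 \<union> \<Union>(range F)" by blast
    show "P (S0 \<union> \<Union>(range F))"
      by (rule finite_character_Union_stages[OF P(1,2) r]) (use stage before_def in auto)
    show "\<exists>X \<subseteq> S0 \<union> \<Union>(range F). Q a X" for a
      using stage[of a] by blast
  qed
qed

section \<open>Progressions with short difference\<close>

definition short_ap_free :: "nat \<Rightarrow> real set \<Rightarrow> bool" where
  "short_ap_free k S \<longleftrightarrow> \<not> (\<exists>m l. 0 < l \<and> l < 1 \<and> (\<forall>i\<le>k. m + real i * l \<in> S))"

lemma short_ap_free_subset: "short_ap_free k S \<Longrightarrow> T \<subseteq> S \<Longrightarrow> short_ap_free k T"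
  unfolding short_ap_free_def by blast

lemma finite_character_short_ap_free: "finite_character (short_ap_free k)"
proof (unfold finite_character_def, rule allI, rule iffI)
  fix S assume "short_ap_free k S"
  then show "\<forall>F\<subseteq>S. finite F \<longrightarrow> short_ap_free k F"
    using short_ap_free_subset by blast
next
  fix S assume small_parts: "\<forall>F\<subseteq>S. finite F \<longrightarrow> short_ap_free k F"
  show "short_ap_free k S"
  proof (unfold short_ap_free_def, rule notI, elim exE conjE)
    fix m l :: real assume l: "0 < l" "l < 1" and ap: "\<forall>i\<le>k. m + real i * l \<in> S"
    then have "(\<lambda>i. m + real i * l) ` {..k} \<subseteq> S" by auto
    then have "short_ap_free k ((\<lambda>i. m + real i * l) ` {..k})"
      using small_parts by simp
    then show False using l unfolding short_ap_free_def by auto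
  qed
qed

lemma finite_character_not_member: "finite_character (\<lambda>S. c \<notin> S)"
proof (unfold finite_character_def, rule allI, rule iffI)
  fix S
  show "c \<notin> S \<Longrightarrow> \<forall>F\<subseteq>S. finite F \<longrightarrow> c \<notin> F" by blast
next
  fix S
  show "\<forall>F\<subseteq>S. finite F \<longrightarrow> c \<notin> F \<Longrightarrow> c \<notin> S" by (drule spec[of _ "{c}"]) auto
qed

lemma affine_interpolation:
  fixes m l i p q :: real
  shows "(q - p) * (m + i * l) = (q - i) * (m + p * l) + (i - p) * (m + q * l)"
  by (simp add: algebra_simps)

lemma parameter_from_two_terms:
  fixes m l a b x :: real
  assumes "i \<noteq> i'" "b \<noteq> 0" "m + real i'' * l = a + b * x"
  shows "x = ((real i' - real i'') * (m + real i * l) + (real i'' - real i) * (m + real i' * l) -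
    (real i' - real i) * a) / ((real i' - real i) * b)"
proof -
  have "(real i' - real i) * (a + b * x) =
      (real i' - real i'') * (m + real i * l) + (real i'' - real i) * (m + real i' * l)"
    using affine_interpolation[of "real i'" "real i" m "real i''" l] assms(3) by simp
  then show ?thesis using assms(1,2) by (simp add: field_simps)
qed

lemma parameter_from_one_term:
  fixes m l a1 a2 b1 b2 x :: real
  assumes "(real q - real i) * b1 + (real i - real p) * b2 \<noteq> 0"
    "m + real p * l = a1 + b1 * x" "m + real q * l = a2 + b2 * x"
  shows "x = ((real q - real p) * (m + real i * l) - (real q - real i) * a1 - (real i - real p) * a2) /
    ((real q - real i) * b1 + (real i - real p) * b2)"
proof -
  have "(real q - real p) * (m + real i * l) = (real q - real i) * (a1 + b1 * x) + (real i - real p) * (a2 + b2 * x)"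
    using affine_interpolation[of "real q" "real p" m "real i" l] assms(2,3) by simp
  then show ?thesis using assms(1) by (simp add: field_simps)
qed

lemma two_old_terms_or_two_new_terms:
  fixes g :: "nat \<Rightarrow> 'a"
  assumes k: "2 \<le> k" and g: "inj_on g {..k}" "g ` {..k} \<subseteq> A \<union> V" "\<not> g ` {..k} \<subseteq> A"
    and V: "finite V" "card V \<le> k"
  shows "(\<exists>i i' i''. i \<le> k \<and> i' \<le> k \<and> i'' \<le> k \<and> i \<noteq> i' \<and> g i \<in> A \<and> g i' \<in> A \<and> g i'' \<in> V) \<or>
    (\<exists>i p q. i \<le> k \<and> p \<le> k \<and> q \<le> k \<and> p \<noteq> q \<and> g i \<in> A \<and> g p \<in> V \<and> g q \<in> V)"
proof -
  obtain i'' where i'': "i'' \<le> k" "g i'' \<in> V" using g(2,3) by blast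
  have "\<exists>i\<le>k. g i \<in> A"
  proof (rule ccontr)
    assume "\<not> (\<exists>i\<le>k. g i \<in> A)"
    then have "g ` {..k} \<subseteq> V" using g(2) by blast
    then have "card (g ` {..k}) \<le> card V" by (rule card_mono[OF V(1)])
    with g(1) V(2) show False by (simp add: card_image)
  qed
  then obtain i where i: "i \<le> k" "g i \<in> A" by blast
  show ?thesis
  proof (cases "\<exists>i'\<le>k. i' \<noteq> i \<and> g i' \<in> A")
    case True
    then show ?thesis using i i'' by blast
  next
    case False
    then have new: "g i' \<in> V" if "i' \<in> {..k} - {i}" for i'
      using that g(2) by blast
    have "\<not> card ({..k} - {i}) \<le> Suc 0" using i(1) k by simp
    then obtain p q where "p \<in> {..k} - {i}" "q \<in> {..k} - {i}" "p \<noteq> q"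
      using card_le_Suc0_iff_eq[of "{..k} - {i}"] by blast
    then show ?thesis using i new by blast
  qed
qed

lemma small_short_ap_breaking_parameters:
  fixes a b :: "'j \<Rightarrow> real"
  assumes k: "2 \<le> k" and S0: "small S0" "short_ap_free k S0" and J: "finite J" "card J \<le> k"
    and b_nonzero: "\<And>j. j \<in> J \<Longrightarrow> b j \<noteq> 0"
    and generic: "\<And>j1 j2 i p q. j1 \<in> J \<Longrightarrow> j2 \<in> J \<Longrightarrow> i \<le> k \<Longrightarrow> p \<le> k \<Longrightarrow> q \<le> k \<Longrightarrow>
      p \<noteq> q \<Longrightarrow> (real i - real q) * b j1 \<noteq> (real i - real p) * b j2"
  shows "small {x. \<not> short_ap_free k (S0 \<union> (\<lambda>j. a j + b j * x) ` J)}"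
proof -
  \<comment> \<open>A progression breaking the property has two terms in S0, which fix it and hence x via any
    new term, or one term in S0 and two new terms, whose interpolation at the old term fixes x.\<close>
  define K where "K = {..k}"
  define two_old where "two_old = (\<lambda>(s, s', i, i', i'', j).
      ((real i' - real i'') * s + (real i'' - real i) * s' - (real i' - real i) * a j) /
      ((real i' - real i) * b j)) ` (S0 \<times> S0 \<times> K \<times> K \<times> K \<times> J)"
  define one_old where "one_old = (\<lambda>(s, i, p, q, j1, j2).
      ((real q - real p) * s - (real q - real i) * a j1 - (real i - real p) * a j2) /
      ((real q - real i) * b j1 + (real i - real p) * b j2)) ` (S0 \<times> K \<times> K \<times> K \<times> J \<times> J)"
  have "small (two_old \<union> one_old)"
    unfolding two_old_def one_old_def K_def
    by (intro small_Un small_image small_Times S0(1) small_finite J(1) finite_atMost)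
  moreover have "{x. \<not> short_ap_free k (S0 \<union> (\<lambda>j. a j + b j * x) ` J)} \<subseteq> two_old \<union> one_old"
  proof
    fix x
    define V where "V = (\<lambda>j. a j + b j * x) ` J"
    assume "x \<in> {x. \<not> short_ap_free k (S0 \<union> (\<lambda>j. a j + b j * x) ` J)}"
    then obtain m l where l: "0 < l" "l < 1" and ap: "\<forall>i\<le>k. m + real i * l \<in> S0 \<union> V"
      unfolding short_ap_free_def V_def by blast
    define g where "g i = m + real i * l" for i
    have "inj_on g {..k}" using l(1) unfolding g_def inj_on_def by auto
    moreover have "g ` {..k} \<subseteq> S0 \<union> V" using ap unfolding g_def by auto
    moreover have "\<not> g ` {..k} \<subseteq> S0" using S0(2) l unfolding short_ap_free_def g_def by auto
    moreover have "card V \<le> k" unfolding V_def using card_image_le[OF J(1)] J(2) by (rule le_trans)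
    ultimately consider
      (two_old) i i' i'' where "i \<le> k" "i' \<le> k" "i'' \<le> k" "i \<noteq> i'" "g i \<in> S0" "g i' \<in> S0" "g i'' \<in> V"
    | (one_old) i p q where "i \<le> k" "p \<le> k" "q \<le> k" "p \<noteq> q" "g i \<in> S0" "g p \<in> V" "g q \<in> V"
      using two_old_terms_or_two_new_terms[OF k, of g S0 V] J(1) unfolding V_def by blast
    then show "x \<in> two_old \<union> one_old"
    proof cases
      case two_old
      then obtain j where j: "j \<in> J" "g i'' = a j + b j * x" unfolding V_def by blast
      with two_old(4) b_nonzero have "x = ((real i' - real i'') * g i + (real i'' - real i) * g i' -
          (real i' - real i) * a j) / ((real i' - real i) * b j)"
        unfolding g_def by (intro parameter_from_two_terms) auto
      then show ?thesis unfolding two_old_def K_def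
        using two_old j(1) by (intro UnI1 image_eqI[where x = "(g i, g i', i, i', i'', j)"]) auto
    next
      case one_old
      then obtain j1 j2 where j: "j1 \<in> J" "g p = a j1 + b j1 * x" "j2 \<in> J" "g q = a j2 + b j2 * x"
        unfolding V_def by blast
      moreover have "(real q - real i) * b j1 + (real i - real p) * b j2 \<noteq> 0"
        using generic[OF j(1,3) one_old(1-4)] by (simp add: algebra_simps)
      ultimately have "x = ((real q - real p) * g i - (real q - real i) * a j1 - (real i - real p) * a j2) /
          ((real q - real i) * b j1 + (real i - real p) * b j2)"
        unfolding g_def by (intro parameter_from_one_term) auto
      then show ?thesis unfolding one_old_def K_def
        using one_old j by (intro UnI2 image_eqI[where x = "(g i, i, p, q, j1, j2)"]) auto
    qed
  qed
  ultimately show ?thesis by (rule small_subset)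
qed

lemma exists_generic_height:
  fixes h :: "'j \<Rightarrow> real" and R :: "real set"
  assumes "finite J" "finite R" and h: "\<And>j. j \<in> J \<Longrightarrow> h j > 0"
  shows "\<exists>t>0. \<forall>j1\<in>J. \<forall>j2\<in>J. \<forall>\<alpha>\<in>R. \<forall>\<beta>\<in>R.
    \<alpha> \<noteq> \<beta> \<longrightarrow> \<alpha> * (h j1 / (t + h j1)) \<noteq> \<beta> * (h j2 / (t + h j2))"
proof -
  define E where "E = (\<lambda>(j1, j2, \<alpha>, \<beta>). h j1 * h j2 * (\<beta> - \<alpha>) / (\<alpha> * h j1 - \<beta> * h j2)) ` (J \<times> J \<times> R \<times> R)"
  have "finite E" unfolding E_def using assms(1,2) by simp
  then have "{0<..} - E \<noteq> {}" using infinite_Ioi by (intro infinite_imp_nonempty Diff_infinite_finite)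
  then obtain t where t: "t > 0" "t \<notin> E" by blast
  have "\<alpha> * (h j1 / (t + h j1)) \<noteq> \<beta> * (h j2 / (t + h j2))"
    if j: "j1 \<in> J" "j2 \<in> J" and \<alpha>\<beta>: "\<alpha> \<in> R" "\<beta> \<in> R" "\<alpha> \<noteq> \<beta>" for j1 j2 \<alpha> \<beta>
  proof
    have h1: "h j1 > 0" and h2: "h j2 > 0" using h j by auto
    assume "\<alpha> * (h j1 / (t + h j1)) = \<beta> * (h j2 / (t + h j2))"
    then have lin: "t * (\<alpha> * h j1 - \<beta> * h j2) = h j1 * h j2 * (\<beta> - \<alpha>)"
      using h1 h2 t(1) by (simp add: field_simps)
    moreover have "h j1 * h j2 * (\<beta> - \<alpha>) \<noteq> 0" using h1 h2 \<alpha>\<beta>(3) by simp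
    ultimately have "\<alpha> * h j1 - \<beta> * h j2 \<noteq> 0" by auto
    with lin have "t = h j1 * h j2 * (\<beta> - \<alpha>) / (\<alpha> * h j1 - \<beta> * h j2)"
      by (simp add: eq_divide_eq)
    then have "t \<in> E" unfolding E_def using j \<alpha>\<beta> by (intro image_eqI[where x = "(j1, j2, \<alpha>, \<beta>)"]) auto
    with t(2) show False ..
  qed
  with t(1) show ?thesis by blast
qed

lemma small_affine_hits:
  fixes a b :: "'j \<Rightarrow> real"
  assumes "finite J" "\<And>j. j \<in> J \<Longrightarrow> b j \<noteq> 0"
  shows "small {x. c \<in> (\<lambda>j. a j + b j * x) ` J}"
proof (rule small_subset)
  show "small ((\<lambda>j. (c - a j) / b j) ` J)" using assms(1) by (intro small_finite) simp
  show "{x. c \<in> (\<lambda>j. a j + b j * x) ` J} \<subseteq> (\<lambda>j. (c - a j) / b j) ` J"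
  proof
    fix x assume "x \<in> {x. c \<in> (\<lambda>j. a j + b j * x) ` J}"
    then obtain j where j: "j \<in> J" "c = a j + b j * x" by blast
    then have "x = (c - a j) / b j" using assms(2)[OF j(1)] by (simp add: field_simps)
    with j(1) show "x \<in> (\<lambda>j. (c - a j) / b j) ` J" by blast
  qed
qed

definition axis_cross :: "real^2 \<Rightarrow> real^2 \<Rightarrow> real" where
  "axis_cross p q = (q$1 * p$2 - p$1 * q$2) / (p$2 - q$2)"

lemma short_ap_free_extension:
  assumes k: "2 \<le> k" and S0: "small S0" "short_ap_free k S0" "1 \<notin> S0"
    and L: "finite L" "card L \<le> k" "\<forall>d\<in>L. d$2 < 0"
  shows "\<exists>x. x$2 > 0 \<and> short_ap_free k (S0 \<union> axis_cross x ` L) \<and> 1 \<notin> axis_cross x ` L"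
proof -
  define h where "h d = - d$2" for d :: "real^2"
  define R where "R = (\<lambda>(i, p). real i - real p) ` ({..k} \<times> {..k})"
  have R: "finite R" unfolding R_def by simp
  have h_pos: "h d > 0" if "d \<in> L" for d using L(3) that by (simp add: h_def)
  obtain t where t: "t > 0" and generic: "\<forall>d1\<in>L. \<forall>d2\<in>L. \<forall>\<alpha>\<in>R. \<forall>\<beta>\<in>R.
      \<alpha> \<noteq> \<beta> \<longrightarrow> \<alpha> * (h d1 / (t + h d1)) \<noteq> \<beta> * (h d2 / (t + h d2))"
    using exists_generic_height[of L R h, OF L(1) R h_pos] by blast
  define a where "a d = d$1 * t / (t + h d)" for d
  define b where "b d = h d / (t + h d)" for d
  have cross: "axis_cross (vector [x1, t]) d = a d + b d * x1" if "d \<in> L" for x1 d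
  proof -
    have "t - d$2 \<noteq> 0" using L(3) that t by force
    then show ?thesis unfolding axis_cross_def a_def b_def h_def by (simp add: diff_divide_distrib algebra_simps)
  qed
  have b_nonzero: "b d \<noteq> 0" if "d \<in> L" for d using h_pos[OF that] t by (simp add: b_def)
  have "small {x1. \<not> short_ap_free k (S0 \<union> (\<lambda>d. a d + b d * x1) ` L)}"
  proof (rule small_short_ap_breaking_parameters[OF k S0(1,2) L(1,2) b_nonzero])
    show "(real i - real q) * b d1 \<noteq> (real i - real p) * b d2"
      if "d1 \<in> L" "d2 \<in> L" "i \<le> k" "p \<le> k" "q \<le> k" "p \<noteq> q" for d1 d2 i p q
      using generic that unfolding R_def b_def by auto
  qed
  moreover have "small {x1. 1 \<in> (\<lambda>d. a d + b d * x1) ` L}"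
    using L(1) b_nonzero by (rule small_affine_hits)
  ultimately have "small ({x1. \<not> short_ap_free k (S0 \<union> (\<lambda>d. a d + b d * x1) ` L)} \<union>
      {x1. 1 \<in> (\<lambda>d. a d + b d * x1) ` L})" (is "small ?bad") by (rule small_Un)
  then have "?bad \<noteq> UNIV" using not_small_UNIV by metis
  then obtain x1 where "short_ap_free k (S0 \<union> (\<lambda>d. a d + b d * x1) ` L)" "1 \<notin> (\<lambda>d. a d + b d * x1) ` L"
    by blast
  moreover have "axis_cross (vector [x1, t]) ` L = (\<lambda>d. a d + b d * x1) ` L"
    using cross by (rule image_cong[OF refl])
  ultimately show ?thesis using t by (intro exI[of _ "vector [x1, t]"]) simp
qed

text \<open>By \<open>crossing_segment_subset_iff\<close> below, this says that any \<open>k\<close> points below the axis are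
  seen through \<open>axis_trace_plane S\<close> from a common point above it.\<close>

definition sees_below_from_above :: "nat \<Rightarrow> real set \<Rightarrow> bool" where
  "sees_below_from_above k S \<longleftrightarrow> (\<forall>L. finite L \<and> card L \<le> k \<and> (\<forall>d\<in>L. d$2 < 0) \<longrightarrow>
     (\<exists>x. x$2 > 0 \<and> axis_cross x ` L \<subseteq> S))"

lemma short_ap_free_0_2: "1 \<le> k \<Longrightarrow> short_ap_free k {0, 2}"
  unfolding short_ap_free_def
proof (intro notI, elim exE conjE)
  fix m l :: real assume "1 \<le> k" "0 < l" "l < 1" "\<forall>i\<le>k. m + real i * l \<in> {0, 2}"
  then have "m \<in> {0, 2}" "m + l \<in> {0, 2}" by (auto dest: spec[of _ 0] spec[of _ 1])
  with \<open>0 < l\<close> \<open>l < 1\<close> show False by auto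
qed

lemma exists_short_ap_free_set_seeing_below:
  assumes k: "2 \<le> k"
  obtains S where "0 \<in> S" "2 \<in> S" "1 \<notin> S" "short_ap_free k S" "sees_below_from_above k S"
proof -
  have P: "finite_character (\<lambda>S. short_ap_free k S \<and> 1 \<notin> S)"
    by (rule finite_character_conj[OF finite_character_short_ap_free finite_character_not_member])
  \<comment> \<open>Configurations are encoded as lists to get a type of tasks of size continuum.\<close>
  define Q where "Q xs X \<longleftrightarrow> (length xs \<le> k \<and> (\<forall>d\<in>set xs. d$2 < 0) \<longrightarrow>
      (\<exists>x. x$2 > 0 \<and> axis_cross x ` set xs \<subseteq> X))" for xs :: "(real^2) list" and X
  have base: "short_ap_free k {0, 2} \<and> 1 \<notin> {0, 2::real}" and "small {0, 2::real}"
    using short_ap_free_0_2 k by (auto intro: small_finite)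
  moreover have "\<exists>X. finite X \<and> Q xs X \<and> short_ap_free k (S0 \<union> X) \<and> 1 \<notin> S0 \<union> X"
    if S0: "small S0" "short_ap_free k S0 \<and> 1 \<notin> S0" for S0 xs
  proof (cases "length xs \<le> k \<and> (\<forall>d\<in>set xs. d$2 < 0)")
    case True
    then have "card (set xs) \<le> k" using card_length le_trans by blast
    then obtain x where "x$2 > 0" "short_ap_free k (S0 \<union> axis_cross x ` set xs)" "1 \<notin> axis_cross x ` set xs"
      using short_ap_free_extension[OF k S0(1)] S0(2) True by blast
    then show ?thesis using S0(2) unfolding Q_def by (intro exI[of _ "axis_cross x ` set xs"]) auto
  qed (use S0 in \<open>auto simp: Q_def\<close>)
  ultimately have "\<exists>S. {0, 2} \<subseteq> S \<and> (short_ap_free k S \<and> 1 \<notin> S) \<and> (\<forall>xs. \<exists>X\<subseteq>S. Q xs X)"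
    by (intro transfinite_greedy_construction[OF card_of_plane_lists_le P]) auto
  then obtain S where S: "{0, 2} \<subseteq> S" "short_ap_free k S" "1 \<notin> S" and tasks: "\<forall>xs. \<exists>X\<subseteq>S. Q xs X"
    by blast
  have "sees_below_from_above k S"
    unfolding sees_below_from_above_def
  proof (intro allI impI, elim conjE)
    fix L :: "(real^2) set" assume L: "finite L" "card L \<le> k" "\<forall>d\<in>L. d$2 < 0"
    obtain xs where xs: "set xs = L" "distinct xs" using finite_distinct_list[OF L(1)] by blast
    from tasks obtain X where "X \<subseteq> S" "Q xs X" by blast
    moreover have "length xs \<le> k" using xs L(2) by (simp add: distinct_card[symmetric])
    ultimately show "\<exists>x. x$2 > 0 \<and> axis_cross x ` L \<subseteq> S"
      using xs(1) L(3) unfolding Q_def by blast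
  qed
  then show thesis using S by (intro that) auto
qed

section \<open>Visibility in the plane\<close>

definition axis_trace_plane :: "real set \<Rightarrow> (real^2) set" where
  "axis_trace_plane S = {p. p$2 \<noteq> 0 \<or> p$1 \<in> S}"

lemma closed_segment_axis_crossing:
  assumes "p$2 * q$2 < 0"
  shows "closed_segment p q \<inter> {z. z$2 = 0} = {vector [axis_cross p q, 0]}"
proof -
  have d: "p$2 - q$2 \<noteq> 0" using assms by auto
  define u0 where "u0 = p$2 / (p$2 - q$2)"
  have "0 < p$2 \<and> q$2 < 0 \<or> p$2 < 0 \<and> 0 < q$2" using assms by (simp add: mult_less_0_iff)
  then have u0: "0 \<le> u0" "u0 \<le> 1" unfolding u0_def by (auto simp: divide_simps)
  have u0_scaled: "u0 * (p$2 - q$2) = p$2" using d unfolding u0_def by simp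
  have on_axis: "((1 - u) *\<^sub>R p + u *\<^sub>R q)$2 = 0 \<longleftrightarrow> u = u0" for u
    using d unfolding u0_def by (auto simp: eq_divide_eq algebra_simps)
  have "((1 - u0) * p$1 + u0 * q$1) * (p$2 - q$2) = p$1 * (p$2 - q$2) + (q$1 - p$1) * (u0 * (p$2 - q$2))"
    by (simp add: algebra_simps)
  also have "\<dots> = q$1 * p$2 - p$1 * q$2"
    unfolding u0_scaled by (simp add: algebra_simps)
  finally have "(1 - u0) * p$1 + u0 * q$1 = axis_cross p q"
    using d unfolding axis_cross_def by (simp add: eq_divide_eq)
  moreover have "(1 - u0) * p$2 + u0 * q$2 = 0"
    using u0_scaled by (simp add: algebra_simps)
  ultimately have crossing: "(1 - u0) *\<^sub>R p + u0 *\<^sub>R q = vector [axis_cross p q, 0]"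
    by (simp add: vec_eq_iff forall_2)
  have "vector [axis_cross p q, 0] \<in> closed_segment p q"
    unfolding closed_segment_def using u0 crossing[symmetric] by blast
  moreover have "closed_segment p q \<inter> {z. z$2 = 0} \<subseteq> {vector [axis_cross p q, 0]}"
    unfolding closed_segment_def using on_axis crossing by auto
  ultimately show ?thesis by auto
qed

lemma crossing_segment_subset_iff:
  assumes "p$2 * q$2 < 0"
  shows "closed_segment p q \<subseteq> axis_trace_plane S \<longleftrightarrow> axis_cross p q \<in> S"
proof -
  have "closed_segment p q \<subseteq> axis_trace_plane S \<longleftrightarrow>
      closed_segment p q \<inter> {z. z$2 = 0} \<subseteq> axis_trace_plane S"
    unfolding axis_trace_plane_def by blast
  then show ?thesis
    unfolding closed_segment_axis_crossing[OF assms] by (simp add: axis_trace_plane_def)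
qed

lemma same_side_segment_subset:
  assumes pq: "p \<in> axis_trace_plane S" "q \<in> axis_trace_plane S"
    and side: "0 \<le> p$2 * q$2" "p$2 \<noteq> 0 \<or> q$2 \<noteq> 0"
  shows "closed_segment p q \<subseteq> axis_trace_plane S"
proof
  fix z assume "z \<in> closed_segment p q"
  then obtain u where u: "0 \<le> u" "u \<le> 1" "z = (1 - u) *\<^sub>R p + u *\<^sub>R q"
    unfolding closed_segment_def by blast
  show "z \<in> axis_trace_plane S"
  proof (cases "z$2 = 0")
    case True
    define A B where "A = (1 - u) * p$2" and "B = u * q$2"
    have "A + B = 0" using True u(3) unfolding A_def B_def by simp
    moreover have "0 \<le> A * B"
    proof -
      have "0 \<le> ((1 - u) * u) * (p$2 * q$2)" using u(1,2) side(1) by simp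
      then show ?thesis unfolding A_def B_def by (simp add: mult_ac)
    qed
    ultimately have "A * A \<le> 0" by (simp add: add_eq_0_iff)
    then have "A = 0 \<and> B = 0" using \<open>A + B = 0\<close> by (auto simp: mult_le_0_iff)
    then have "z = p \<or> z = q" using side(2) u(3) unfolding A_def B_def by auto
    then show ?thesis using pq by blast
  qed (simp add: axis_trace_plane_def)
qed

definition mirror :: "real^2 \<Rightarrow> real^2" where
  "mirror p = vector [p$1, - p$2]"

lemma mirror_nth [simp]: "mirror p $ 1 = p$1" "mirror p $ 2 = - p$2"
  unfolding mirror_def by simp_all

lemma mirror_mirror [simp]: "mirror (mirror p) = p"
  by (simp add: vec_eq_iff forall_2)

lemma linear_mirror: "linear mirror"
  by (auto simp: linear_iff vec_eq_iff forall_2)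

lemma mirror_in_axis_trace_plane [simp]: "mirror p \<in> axis_trace_plane S \<longleftrightarrow> p \<in> axis_trace_plane S"
  by (simp add: axis_trace_plane_def)

lemma sees_through_mirror:
  "sees_through (axis_trace_plane S) (mirror x) (mirror p) \<longleftrightarrow> sees_through (axis_trace_plane S) x p"
proof -
  have "mirror ` A \<subseteq> axis_trace_plane S \<longleftrightarrow> A \<subseteq> axis_trace_plane S" for A
    by auto
  then show ?thesis
    unfolding sees_through_def closed_segment_linear_image[OF linear_mirror] by simp
qed

lemma seen_from_axis_point:
  assumes "a \<in> axis_trace_plane S" "a$2 = 0" "P \<subseteq> axis_trace_plane S" "\<forall>p\<in>P. p$2 = 0 \<longrightarrow> p = a"
  shows "\<forall>p\<in>P. sees_through (axis_trace_plane S) a p"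
  unfolding sees_through_def using assms same_side_segment_subset[of a S] by fastforce

lemma seen_from_above:
  assumes "sees_below_from_above k S" "P \<subseteq> axis_trace_plane S" "finite P" "card {p\<in>P. p$2 < 0} \<le> k"
  shows "\<exists>x. x$2 > 0 \<and> (\<forall>p\<in>P. sees_through (axis_trace_plane S) x p)"
proof -
  have "finite {p\<in>P. p$2 < 0} \<and> card {p\<in>P. p$2 < 0} \<le> k \<and> (\<forall>d\<in>{p\<in>P. p$2 < 0}. d$2 < 0) \<longrightarrow>
      (\<exists>x. x$2 > 0 \<and> axis_cross x ` {p\<in>P. p$2 < 0} \<subseteq> S)"
    using assms(1) unfolding sees_below_from_above_def by (rule spec)
  then have "\<exists>x. x$2 > 0 \<and> axis_cross x ` {p\<in>P. p$2 < 0} \<subseteq> S"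
    using assms(3,4) by simp
  then obtain x where x: "x$2 > 0" "axis_cross x ` {p\<in>P. p$2 < 0} \<subseteq> S" by blast
  then have x_in: "x \<in> axis_trace_plane S" by (simp add: axis_trace_plane_def)
  have "closed_segment x p \<subseteq> axis_trace_plane S" if "p \<in> P" for p
  proof (cases "p$2 < 0")
    case True
    then have "x$2 * p$2 < 0" using x(1) by (simp add: mult_pos_neg)
    then show ?thesis using crossing_segment_subset_iff x(2) that True by blast
  next
    case False
    then have "0 \<le> x$2 * p$2" using x(1) by simp
    moreover have "p \<in> axis_trace_plane S" using assms(2) that by blast
    ultimately show ?thesis using same_side_segment_subset[OF x_in] x(1) by simp
  qed
  then show ?thesis using x(1) x_in assms(2) unfolding sees_through_def by blast
qed

lemma seen_from_below:
  assumes "sees_below_from_above k S" "P \<subseteq> axis_trace_plane S" "finite P" "card {p\<in>P. p$2 > 0} \<le> k"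
  shows "\<exists>x. x$2 < 0 \<and> (\<forall>p\<in>P. sees_through (axis_trace_plane S) x p)"
proof -
  have "{p \<in> mirror ` P. p$2 < 0} = mirror ` {p\<in>P. p$2 > 0}" by force
  then have "card {p \<in> mirror ` P. p$2 < 0} \<le> k"
    using assms(3,4) card_image_le[of "{p\<in>P. p$2 > 0}" mirror] by simp
  moreover have "mirror ` P \<subseteq> axis_trace_plane S" "finite (mirror ` P)" using assms(2,3) by auto
  ultimately obtain x where "x$2 > 0" "\<forall>p\<in>mirror ` P. sees_through (axis_trace_plane S) x p"
    using seen_from_above[OF assms(1)] by blast
  then show ?thesis
    using sees_through_mirror[of S "mirror x"] by (intro exI[of _ "mirror x"]) auto
qed

lemma common_viewpoint:
  assumes vis: "sees_below_from_above k S" and "c \<in> S"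
    and P: "P \<subseteq> axis_trace_plane S" "finite P" "card P \<le> 2 * k + 3"
  shows "\<exists>x\<in>axis_trace_plane S. \<forall>p\<in>P. sees_through (axis_trace_plane S) x p"
proof -
  define A where "A = {p\<in>P. p$2 = 0}"
  define B where "B = {p\<in>P. p$2 < 0}"
  define C where "C = {p\<in>P. p$2 > 0}"
  have fin: "finite A" "finite B" "finite C" using P(2) unfolding A_def B_def C_def by simp_all
  have "P = A \<union> (B \<union> C)" "A \<inter> (B \<union> C) = {}" "B \<inter> C = {}"
    unfolding A_def B_def C_def by auto
  then have "card P = card A + (card B + card C)"
    using fin by (simp add: card_Un_disjoint)
  then consider "card A \<le> 1" | "card B \<le> k" | "card C \<le> k"
    using P(3) by linarith
  then show ?thesis
  proof cases
    case 1
    obtain a where a: "a \<in> axis_trace_plane S" "a$2 = 0" "A \<subseteq> {a}"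
    proof (cases "A = {}")
      case True
      then show ?thesis using \<open>c \<in> S\<close> by (intro that[of "vector [c, 0]"]) (auto simp: axis_trace_plane_def)
    next
      case False
      with 1 fin(1) have "card A = 1" by (simp add: card_gt_0_iff le_antisym Suc_leI)
      then obtain a where "A = {a}" by (rule card_1_singletonE)
      then show ?thesis using P(1) by (intro that[of a]) (auto simp: A_def)
    qed
    then show ?thesis
      using seen_from_axis_point[OF a(1,2) P(1)] unfolding A_def by blast
  next
    case 2
    then obtain x where "x$2 > 0" "\<forall>p\<in>P. sees_through (axis_trace_plane S) x p"
      using seen_from_above[OF vis P(1,2)] unfolding B_def by blast
    moreover from this(1) have "x \<in> axis_trace_plane S" by (simp add: axis_trace_plane_def)
    ultimately show ?thesis by blast
  next
    case 3
    then obtain x where "x$2 < 0" "\<forall>p\<in>P. sees_through (axis_trace_plane S) x p"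
      using seen_from_below[OF vis P(1,2)] unfolding C_def by blast
    moreover from this(1) have "x \<in> axis_trace_plane S" by (simp add: axis_trace_plane_def)
    ultimately show ?thesis by blast
  qed
qed

lemma lattice_row_not_seen_from_above:
  assumes "short_ap_free k S" "x$2 > 0"
  shows "\<exists>i\<le>k. \<not> closed_segment x (vector [real i, -1]) \<subseteq> axis_trace_plane S"
proof (rule ccontr)
  define l where "l = x$2 / (x$2 + 1)"
  have l: "0 < l" "l < 1" unfolding l_def using assms(2) by (auto simp: divide_simps)
  assume "\<not> ?thesis"
  then have "axis_cross x (vector [real i, -1]) \<in> S" if "i \<le> k" for i
    using crossing_segment_subset_iff[of x "vector [real i, -1]"] assms(2) that by auto
  moreover have "axis_cross x (vector [real i, -1]) = x$1 / (x$2 + 1) + real i * l" for i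
    using assms(2) unfolding axis_cross_def l_def by (simp add: add_divide_distrib)
  ultimately have "\<forall>i\<le>k. x$1 / (x$2 + 1) + real i * l \<in> S" by simp
  then show False using assms(1) l unfolding short_ap_free_def by blast
qed

lemma axis_point_in_segment:
  assumes "c \<in> closed_segment a b"
  shows "vector [c, 0] \<in> closed_segment (vector [a, 0]) (vector [b, 0] :: real^2)"
proof -
  have "linear (\<lambda>t::real. vector [t, 0] :: real^2)"
    by (auto simp: linear_iff vec_eq_iff forall_2)
  from closed_segment_linear_image[OF this, of a b] show ?thesis using assms by auto
qed

definition lattice_configuration :: "nat \<Rightarrow> (real^2) set" where
  "lattice_configuration k = (\<lambda>(i, y). vector [real i, y]) ` ({0, 2} \<times> {0} \<union> {..k} \<times> {-1, 1})"

lemma card_lattice_configuration: "card (lattice_configuration k) = 2 * k + 4"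
proof -
  have "card (lattice_configuration k) = card ({0, 2 :: nat} \<times> {0 :: real} \<union> {..k} \<times> {-1, 1})"
    unfolding lattice_configuration_def
    by (rule card_image) (auto simp: inj_on_def vec_eq_iff forall_2)
  also have "\<dots> = 2 * k + 4"
    by (subst card_Un_disjoint) (auto simp: card_cartesian_product)
  finally show ?thesis .
qed

lemma lattice_configuration_subset:
  "0 \<in> S \<Longrightarrow> 2 \<in> S \<Longrightarrow> lattice_configuration k \<subseteq> axis_trace_plane S"
  unfolding lattice_configuration_def axis_trace_plane_def by auto

lemma lattice_configuration_not_seen:
  assumes S: "short_ap_free k S" "1 \<notin> S" and x: "x \<in> axis_trace_plane S"
  shows "\<exists>p\<in>lattice_configuration k. \<not> sees_through (axis_trace_plane S) x p"
proof (rule ccontr)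
  assume "\<not> ?thesis"
  then have sees: "closed_segment x p \<subseteq> axis_trace_plane S" if "p \<in> lattice_configuration k" for p
    using that unfolding sees_through_def by blast
  have row: "vector [real i, y] \<in> lattice_configuration k" if "i \<le> k" "y \<in> {-1, 1}" for i y
    using that unfolding lattice_configuration_def by force
  consider "x$2 > 0" | "x$2 < 0" | "x$2 = 0" by linarith
  then show False
  proof cases
    case 1
    from lattice_row_not_seen_from_above[OF S(1) this] obtain i
      where "i \<le> k" "\<not> closed_segment x (vector [real i, -1]) \<subseteq> axis_trace_plane S" by blast
    with sees row[of i "-1"] show False by simp
  next
    case 2
    then have "mirror x $ 2 > 0" by simp
    from lattice_row_not_seen_from_above[OF S(1) this] obtain i
      where i: "i \<le> k" "\<not> closed_segment (mirror x) (vector [real i, -1]) \<subseteq> axis_trace_plane S"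
      by blast
    have "sees_through (axis_trace_plane S) x (vector [real i, 1])"
      using sees row[of i 1] i(1) x unfolding sees_through_def by (simp add: axis_trace_plane_def)
    then have "sees_through (axis_trace_plane S) (mirror x) (vector [real i, -1])"
      using sees_through_mirror[of S x "vector [real i, 1]"] by (simp add: mirror_def)
    with i(2) show False by (simp add: sees_through_def)
  next
    case 3
    define c where "c = x$1"
    have x_axis: "x = vector [c, 0]" "c \<noteq> 1"
      using 3 x S(2) unfolding c_def by (auto simp: vec_eq_iff forall_2 axis_trace_plane_def)
    have "1 \<in> closed_segment c 0 \<or> 1 \<in> closed_segment c 2"
      using x_axis(2) by (auto simp: closed_segment_eq_real_ivl)
    then have "vector [1, 0] \<in> closed_segment x (vector [0, 0]) \<union> closed_segment x (vector [2, 0])"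
      unfolding x_axis(1) using axis_point_in_segment by fastforce
    moreover have "vector [0, 0] \<in> lattice_configuration k" "vector [2, 0] \<in> lattice_configuration k"
      unfolding lattice_configuration_def by force+
    then have "closed_segment x (vector [0, 0]) \<union> closed_segment x (vector [2, 0]) \<subseteq> axis_trace_plane S"
      using sees by blast
    moreover have "vector [1, 0] \<notin> axis_trace_plane S" using S(2) by (simp add: axis_trace_plane_def)
    ultimately show False by blast
  qed
qed

theorem theorem1p4:
  fixes k :: nat
  assumes "k \<ge> 2"
  shows "\<exists>T :: (real^2) set.
     (\<forall>P. P \<subseteq> T \<and> finite P \<and> card P \<le> 2*k+3 \<longrightarrow>
          (\<exists>x\<in>T. \<forall>p\<in>P. sees_through T x p)) \<and>
     (\<exists>P. P \<subseteq> T \<and> finite P \<and> card P = 2*k+4 \<and>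
          \<not> (\<exists>x\<in>T. \<forall>p\<in>P. sees_through T x p))"
proof -
  obtain S where S: "0 \<in> S" "2 \<in> S" "1 \<notin> S" "short_ap_free k S" "sees_below_from_above k S"
    using exists_short_ap_free_set_seeing_below assms by blast
  show ?thesis
  proof (rule exI[of _ "axis_trace_plane S"], intro conjI allI impI)
    show "\<exists>x\<in>axis_trace_plane S. \<forall>p\<in>P. sees_through (axis_trace_plane S) x p"
      if "P \<subseteq> axis_trace_plane S \<and> finite P \<and> card P \<le> 2*k+3" for P
      using that by (intro common_viewpoint[OF S(5,1)]) auto
    show "\<exists>P. P \<subseteq> axis_trace_plane S \<and> finite P \<and> card P = 2*k+4 \<and>
        \<not> (\<exists>x\<in>axis_trace_plane S. \<forall>p\<in>P. sees_through (axis_trace_plane S) x p)"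
    proof (rule exI[of _ "lattice_configuration k"], intro conjI)
      show "lattice_configuration k \<subseteq> axis_trace_plane S"
        using S(1,2) by (rule lattice_configuration_subset)
      show "card (lattice_configuration k) = 2*k+4" by (rule card_lattice_configuration)
      then show "finite (lattice_configuration k)" by (simp add: card_ge_0_finite)
      show "\<not> (\<exists>x\<in>axis_trace_plane S. \<forall>p\<in>lattice_configuration k. sees_through (axis_trace_plane S) x p)"
        using lattice_configuration_not_seen[OF S(4,3)] by blast
    qed
  qed
qed

end
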